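(* Let $A$ be a commutative ring, $r,d\ge1$, $B=A[x_1,\dots,x_r]$, let $k\ge1$ and $\alpha\in\mathbb{N}^r\setminus\{0\}$ with $\gcd(\alpha)$ invertible in $A$. If $k|\alpha|\le d$, then $\gamma^k(x^\alpha)\times\gamma^{d-k}(1)\notin\Gamma^d_A(B)_{<k\alpha}$.
   Context: $\Gamma^d_A(B)$ is identified with $\mathrm{TS}^d_A(B)=(B^{\otimes_A d})^{\mathfrak S_d}$ (componentwise multiplication). For a monomial $f$, $\gamma^k(f)\times\gamma^{d-k}(1)=\sum_{S\subseteq\{1..d\},|S|=k}\bigotimes_{j}f_j$ with $f_j=f$ for $j\in S$, $f_j=1$ otherwise. $B^{\otimes d}$ is $\mathbb{N}^r$-graded by giving $x^{\beta_1}\otimes\dots\otimes x^{\beta_d}$ multidegree $\beta_1+\dots+\beta_d$. $\beta<\gamma$ means $\beta\le\gamma$ componentwise and $\beta\neq\gamma$; $\Gamma^d_A(B)_{<\gamma}$ is the $A$-subalgebra generated by homogeneous elements of multidegree $<\gamma$. *)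

theory Defs
  imports "HOL-Library.Poly_Mapping" "HOL-Combinatorics.Permutations"
begin

text \<open>Model of B^(tensor d) for B = A[x_0..x_{r-1}]: the polynomial ring over A in the
variables x_{j,i} (j < d tensor factor, i < r variable), i.e. x^b_0 (x) ... (x) x^b_(d-1)
is the monomial with exponent b_j i at variable (j,i).\<close>

type_synonym tmon = "(nat \<times> nat) \<Rightarrow>\<^sub>0 nat"
type_synonym 'a tpoly = "tmon \<Rightarrow>\<^sub>0 'a"

definition in_tensor :: "nat \<Rightarrow> nat \<Rightarrow> ('a::zero) tpoly \<Rightarrow> bool" where
  "in_tensor d r p \<longleftrightarrow> (\<forall>m::tmon. m \<in> Poly_Mapping.keys p \<longrightarrow> Poly_Mapping.keys m \<subseteq> {..<d} \<times> {..<r})"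

definition perm_mon :: "(nat \<Rightarrow> nat) \<Rightarrow> tmon \<Rightarrow> tmon" where
  "perm_mon \<sigma> m = Abs_poly_mapping (\<lambda>(j,i). Poly_Mapping.lookup m (\<sigma> j, i))"

definition symmetric_tensor :: "nat \<Rightarrow> nat \<Rightarrow> ('a::zero) tpoly \<Rightarrow> bool" where
  "symmetric_tensor d r p \<longleftrightarrow> in_tensor d r p \<and>
     (\<forall>\<sigma> m. \<sigma> permutes {..<d} \<longrightarrow> Poly_Mapping.lookup p (perm_mon \<sigma> m) = Poly_Mapping.lookup p m)"

definition mdeg :: "nat \<Rightarrow> tmon \<Rightarrow> nat \<Rightarrow> nat" where
  "mdeg d m i = (\<Sum>j<d. Poly_Mapping.lookup m (j, i))"

definition homogeneous_of :: "nat \<Rightarrow> nat \<Rightarrow> (nat \<Rightarrow> nat) \<Rightarrow> ('a::zero) tpoly \<Rightarrow> bool" where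
  "homogeneous_of d r \<beta> p \<longleftrightarrow> (\<forall>m\<in>Poly_Mapping.keys p. \<forall>i<r. mdeg d m i = \<beta> i)"

definition mdeg_less :: "nat \<Rightarrow> (nat \<Rightarrow> nat) \<Rightarrow> (nat \<Rightarrow> nat) \<Rightarrow> bool" where
  "mdeg_less r \<beta> \<gamma> \<longleftrightarrow> (\<forall>i<r. \<beta> i \<le> \<gamma> i) \<and> (\<exists>i<r. \<beta> i \<noteq> \<gamma> i)"

inductive_set subalg_gen :: "('a::comm_ring_1) tpoly set \<Rightarrow> 'a tpoly set" for G where
  const: "Poly_Mapping.single 0 c \<in> subalg_gen G"
| gen: "g \<in> G \<Longrightarrow> g \<in> subalg_gen G"
| add: "p \<in> subalg_gen G \<Longrightarrow> q \<in> subalg_gen G \<Longrightarrow> p + q \<in> subalg_gen G"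
| mult: "p \<in> subalg_gen G \<Longrightarrow> q \<in> subalg_gen G \<Longrightarrow> p * q \<in> subalg_gen G"

definition Gamma_less :: "nat \<Rightarrow> nat \<Rightarrow> (nat \<Rightarrow> nat) \<Rightarrow> ('a::comm_ring_1) tpoly set" where
  "Gamma_less d r \<gamma> = subalg_gen {p. symmetric_tensor d r p \<and>
       (\<exists>\<beta>. mdeg_less r \<beta> \<gamma> \<and> homogeneous_of d r \<beta> p)}"

definition mon_on :: "nat \<Rightarrow> (nat \<Rightarrow> nat) \<Rightarrow> nat set \<Rightarrow> tmon" where
  "mon_on r \<alpha> S = (\<Sum>j\<in>S. \<Sum>i<r. Poly_Mapping.single (j, i) (\<alpha> i))"

text \<open>gamma^k(x^alpha) times gamma^(d-k)(1) = sum over k-subsets S of the d factors.\<close>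
definition gamma_prod :: "nat \<Rightarrow> nat \<Rightarrow> (nat \<Rightarrow> nat) \<Rightarrow> nat \<Rightarrow> ('a::comm_ring_1) tpoly" where
  "gamma_prod d r \<alpha> k = (\<Sum>S\<in>{S. S \<subseteq> {..<d} \<and> card S = k}. Poly_Mapping.single (mon_on r \<alpha> S) 1)"

end

theory Submission
  imports Defs
begin

text \<open>
  For each variable index \<open>i\<close> we construct an \<open>A\<close>-linear form on \<open>A[x_{j,i}]\<close> that vanishes on
  \<open>\<Gamma>\<^sup>d\<^sub>A(B)\<^sub><\<^sub>\<gamma>\<close> for \<open>\<gamma> = k\<alpha>\<close>, but takes the value \<open>\<plusminus>\<alpha>\<^sub>i\<close> on
  \<open>\<gamma>\<^sup>k(x\<^sup>\<alpha>) \<times> \<gamma>\<^sup>d\<^sup>-\<^sup>k(1)\<close>; hence all \<open>\<alpha>\<^sub>i\<close>, and so \<open>gcd(\<alpha>)\<close>, vanish in \<open>A\<close>.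
  On a monomial \<open>m\<close> of multidegree \<open>\<gamma>\<close> the form is
  \<open>\<Sum>\<^sub>l (-1)\<^sup>l\<^sup>-\<^sup>1 (d choose l) [m lives in the first l factors] \<cdot> (exponent of x\<^sub>i in factor 0)\<close>
  and it is zero on other multidegrees, so it kills constants and the generators.
  The exponent of \<open>x\<^sub>i\<close> in factor 0 is additive, so on a product \<open>p q\<close> of symmetric tensors
  without constant term the form splits into two halves. By symmetry each half only depends
  on how many factors the monomials of \<open>p\<close> and \<open>q\<close> occupy, say \<open>s, t \<ge> 1\<close> with
  \<open>s + t \<le> |\<gamma>| \<le> d\<close>, and counting the placements gives the coefficient
  \<open>\<Sum>\<^sub>l (-1)\<^sup>l\<^sup>-\<^sup>1 (d choose l) (l-1 choose s-1) (l choose t)\<close>, an alternating sum of a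
  polynomial in \<open>l\<close> of degree \<open>< d\<close>, which is zero.
\<close>

lemma alternating_sum_choose_mult_choose_eq_0:
  assumes "i < n"
  shows "(\<Sum>v\<le>n. (-1::int)^v * of_nat (n choose v) * of_nat (v choose i)) = 0"
proof -
  have "(\<Sum>v\<le>n. (-1::int)^v * of_nat (n choose v) * of_nat (v choose i))
      = (\<Sum>v\<in>{i..n}. (-1::int)^v * of_nat (n choose i) * of_nat ((n-i) choose (v-i)))"
  proof (rule sum.mono_neutral_cong_right)
    fix v assume "v \<in> {i..n}"
    then show "(-1::int)^v * of_nat (n choose v) * of_nat (v choose i)
             = (-1::int)^v * of_nat (n choose i) * of_nat ((n-i) choose (v-i))"
      using choose_mult[of i v n] by (simp add: mult.assoc flip: of_nat_mult)
  qed auto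
  also have "\<dots> = (\<Sum>u\<in>{0..n-i}. (-1::int)^(u+i) * of_nat (n choose i) * of_nat ((n-i) choose u))"
    using sum.shift_bounds_cl_nat_ivl[of "\<lambda>v. (-1::int)^v * of_nat (n choose i) * of_nat ((n-i) choose (v-i))" 0 i "n-i"] assms
    by simp
  also have "\<dots> = (-1)^i * of_nat (n choose i) * (\<Sum>u\<le>n-i. (-1::int)^u * of_nat ((n-i) choose u))"
    by (simp add: sum_distrib_left power_add atLeast0AtMost mult_ac)
  also have "\<dots> = 0" using assms by (simp add: choose_alternating_sum)
  finally show ?thesis .
qed

lemma alternating_sum_choose_mult_choose_add_eq_0:
  assumes "j < n"
  shows "(\<Sum>v\<le>n. (-1::int)^v * of_nat (n choose v) * of_nat ((v + c) choose j)) = 0"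
proof -
  have "(\<Sum>v\<le>n. (-1::int)^v * of_nat (n choose v) * of_nat ((v + c) choose j))
     = (\<Sum>v\<le>n. \<Sum>l\<le>j. (-1::int)^v * of_nat (n choose v) * (of_nat (v choose l) * of_nat (c choose (j - l))))"
    by (simp only: vandermonde[symmetric] of_nat_sum sum_distrib_left of_nat_mult)
  also have "\<dots> = (\<Sum>l\<le>j. of_nat (c choose (j - l)) * (\<Sum>v\<le>n. (-1::int)^v * of_nat (n choose v) * of_nat (v choose l)))"
    by (subst sum.swap) (simp add: sum_distrib_left mult_ac)
  also have "\<dots> = 0" using assms by (simp add: alternating_sum_choose_mult_choose_eq_0)
  finally show ?thesis .
qed

lemma alternating_sum_choose_pred_mult_choose_eq_0:
  assumes "1 \<le> s" "1 \<le> t" "s + t \<le> N"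
  shows "(\<Sum>m\<in>{1..N}. (-1::int)^(m-1) * of_nat (N choose m) * of_nat ((m-1) choose (s-1)) * of_nat (m choose t)) = 0"
proof -
  have "(\<Sum>m\<in>{1..N}. (-1::int)^(m-1) * of_nat (N choose m) * of_nat ((m-1) choose (s-1)) * of_nat (m choose t))
      = (\<Sum>m\<in>{t..N}. (-1::int)^(m-1) * of_nat (N choose t) * of_nat ((N-t) choose (m-t)) * of_nat ((m-1) choose (s-1)))"
  proof (rule sum.mono_neutral_cong_right)
    fix m assume "m \<in> {t..N}"
    then show "(-1::int)^(m-1) * of_nat (N choose m) * of_nat ((m-1) choose (s-1)) * of_nat (m choose t)
             = (-1::int)^(m-1) * of_nat (N choose t) * of_nat ((N-t) choose (m-t)) * of_nat ((m-1) choose (s-1))"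
      using choose_mult[of t m N] by (simp add: mult_ac flip: of_nat_mult)
  qed (use assms in auto)
  also have "\<dots> = (\<Sum>v\<in>{0..N-t}. (-1::int)^(v+t-1) * of_nat (N choose t) * of_nat ((N-t) choose v) * of_nat ((v+(t-1)) choose (s-1)))"
    using sum.shift_bounds_cl_nat_ivl[of "\<lambda>m. (-1::int)^(m-1) * of_nat (N choose t) * of_nat ((N-t) choose (m-t)) * of_nat ((m-1) choose (s-1))" 0 t "N-t"] assms
    by (simp add: add.commute)
  also have "\<dots> = (-1)^(t-1) * of_nat (N choose t) * (\<Sum>v\<le>N-t. (-1::int)^v * of_nat ((N-t) choose v) * of_nat ((v+(t-1)) choose (s-1)))"
  proof -
    have "\<And>v. (-1::int)^(v+t-1) = (-1)^v * (-1)^(t-1)" using assms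
      by (metis Nat.add_diff_assoc le_add2 le_trans power_add)
    then show ?thesis by (simp add: sum_distrib_left atLeast0AtMost mult_ac)
  qed
  also have "\<dots> = 0" using assms alternating_sum_choose_mult_choose_add_eq_0[of "s-1" "N-t" "t-1"] by simp
  finally show ?thesis .
qed

lemma alternating_sum_choose_mult_choose_pred:
  assumes "1 \<le> k" "k \<le> N"
  shows "(\<Sum>m\<in>{1..N}. (-1::int)^(m-1) * of_nat (N choose m) * of_nat ((m-1) choose (k-1))) = (-1)^(k-1)"
  using assms
proof (induction k rule: nat_induct_at_least)
  case base
  have "(\<Sum>m\<le>N. (-1::int)^m * of_nat (N choose m)) = 0"
    using base by (simp add: choose_alternating_sum)
  moreover have "(\<Sum>m\<le>N. (-1::int)^m * of_nat (N choose m)) = 1 + (\<Sum>m\<in>{1..N}. (-1::int)^m * of_nat (N choose m))"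
    by (simp add: atMost_atLeast0 sum.atLeast_Suc_atMost)
  moreover have "(-1::int)^(m-1) = - ((-1)^m)" if "m \<in> {1..N}" for m
    using that by (cases m) auto
  ultimately show ?case by (simp add: sum_negf)
next
  case (Suc k)
  have IH: "(\<Sum>m\<in>{1..N}. (-1::int)^(m-1) * of_nat (N choose m) * of_nat ((m-1) choose (k-1))) = (-1)^(k-1)"
    using Suc by auto
  have "(\<Sum>m\<le>N. (-1::int)^m * of_nat (N choose m) * of_nat (m choose k)) = 0"
    using Suc alternating_sum_choose_mult_choose_eq_0[of k N] by auto
  moreover have "(\<Sum>m\<le>N. (-1::int)^m * of_nat (N choose m) * of_nat (m choose k))
     = - (\<Sum>m\<in>{1..N}. (-1::int)^(m-1) * of_nat (N choose m) * of_nat (m choose k))"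
  proof -
    have "(\<Sum>m\<le>N. (-1::int)^m * of_nat (N choose m) * of_nat (m choose k)) = (\<Sum>m\<in>{1..N}. (-1::int)^m * of_nat (N choose m) * of_nat (m choose k))"
      using Suc by (simp add: atMost_atLeast0 sum.atLeast_Suc_atMost)
    moreover have "(-1::int)^(m-1) = - ((-1)^m)" if "m \<in> {1..N}" for m
      using that by (cases m) auto
    ultimately show ?thesis by (simp add: sum_negf[symmetric])
  qed
  moreover have "(\<Sum>m\<in>{1..N}. (-1::int)^(m-1) * of_nat (N choose m) * of_nat (m choose k))
     = (\<Sum>m\<in>{1..N}. (-1::int)^(m-1) * of_nat (N choose m) * of_nat ((m-1) choose (Suc k - 1)))
     + (\<Sum>m\<in>{1..N}. (-1::int)^(m-1) * of_nat (N choose m) * of_nat ((m-1) choose (k-1)))"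
  proof -
    have "m choose k = ((m-1) choose k) + ((m-1) choose (k-1))" if "m \<in> {1..N}" for m
      using Suc(1) that by (cases m; cases k) auto
    then show ?thesis by (simp add: sum.distrib[symmetric] distrib_left)
  qed
  moreover have "(-1::int)^(Suc k - 1) = - ((-1)^(k-1))" using Suc.hyps by (cases k) auto
  ultimately show ?case using IH by linarith
qed

abbreviation lookup :: "('a \<Rightarrow>\<^sub>0 'b::zero) \<Rightarrow> 'a \<Rightarrow> 'b" where
  "lookup \<equiv> Poly_Mapping.lookup"

abbreviation keys :: "('a \<Rightarrow>\<^sub>0 'b::zero) \<Rightarrow> 'a set" where
  "keys \<equiv> Poly_Mapping.keys"

lemma lookup_perm_mon:
  assumes "\<sigma> permutes {..<d}"
  shows "lookup (perm_mon \<sigma> m) x = lookup m (\<sigma> (fst x), snd x)"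
proof -
  have sinv: "\<sigma> (inv \<sigma> y) = y" "inv \<sigma> (\<sigma> y) = y" for y
    using assms permutes_inverses by fastforce+
  have "{x. lookup m (\<sigma> (fst x), snd x) \<noteq> 0} \<subseteq> (\<lambda>x. (inv \<sigma> (fst x), snd x)) ` keys m"
  proof
    fix x assume "x \<in> {x. lookup m (\<sigma> (fst x), snd x) \<noteq> 0}"
    then have "(\<sigma> (fst x), snd x) \<in> keys m" by (simp add: in_keys_iff)
    moreover have "x = (inv \<sigma> (\<sigma> (fst x)), snd x)" using sinv by simp
    ultimately show "x \<in> (\<lambda>x. (inv \<sigma> (fst x), snd x)) ` keys m"
      by (metis (no_types, lifting) fst_conv image_eqI snd_conv)
  qed
  then have "finite {x. lookup m (\<sigma> (fst x), snd x) \<noteq> 0}"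
    by (rule finite_subset) simp
  moreover have "perm_mon \<sigma> m = Abs_poly_mapping (\<lambda>x. lookup m (\<sigma> (fst x), snd x))"
    unfolding perm_mon_def by (simp add: split_def)
  ultimately show ?thesis
    using lookup_Abs_poly_mapping by simp
qed

lemma perm_mon_add:
  assumes "\<sigma> permutes {..<d}"
  shows "perm_mon \<sigma> (a + b) = perm_mon \<sigma> a + perm_mon \<sigma> b"
  by (rule poly_mapping_eqI) (simp add: lookup_perm_mon[OF assms] lookup_add)

lemma perm_mon_comp:
  assumes "\<sigma> permutes {..<d}" "\<tau> permutes {..<d}"
  shows "perm_mon \<sigma> (perm_mon \<tau> m) = perm_mon (\<tau> \<circ> \<sigma>) m"
proof -
  have "(\<tau> \<circ> \<sigma>) permutes {..<d}"
    using assms by (simp add: permutes_compose)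
  then show ?thesis
    by (intro poly_mapping_eqI) (simp add: lookup_perm_mon[OF assms(1)] lookup_perm_mon[OF assms(2)] lookup_perm_mon)
qed

lemma perm_mon_id: "perm_mon id m = m"
  by (rule poly_mapping_eqI) (simp add: lookup_perm_mon[OF permutes_id])

lemma perm_mon_perm_mon_inv:
  assumes "\<sigma> permutes {..<d}"
  shows "perm_mon \<sigma> (perm_mon (inv \<sigma>) m) = m"
  using assms permutes_inv[OF assms] by (simp add: perm_mon_comp permutes_inv_o perm_mon_id)

lemma perm_mon_inv_perm_mon:
  assumes "\<sigma> permutes {..<d}"
  shows "perm_mon (inv \<sigma>) (perm_mon \<sigma> m) = m"
  using assms permutes_inv[OF assms] by (simp add: perm_mon_comp permutes_inv_o perm_mon_id)

lemma perm_mon_eq_0_iff: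
  assumes "\<sigma> permutes {..<d}"
  shows "perm_mon \<sigma> m = 0 \<longleftrightarrow> m = 0"
proof -
  have "perm_mon \<sigma> 0 = 0"
    by (rule poly_mapping_eqI) (simp add: lookup_perm_mon[OF assms])
  then show ?thesis
    by (metis assms perm_mon_inv_perm_mon)
qed

lemma perm_mon_add_eq_iff:
  assumes "\<sigma> permutes {..<d}"
  shows "perm_mon \<sigma> a + perm_mon \<sigma> b = perm_mon \<sigma> m \<longleftrightarrow> a + b = m"
  by (metis assms perm_mon_add perm_mon_inv_perm_mon)

lemma mdeg_add: "mdeg d (a + b) i = mdeg d a i + mdeg d b i"
  unfolding mdeg_def by (simp add: lookup_add sum.distrib)

lemma mdeg_perm_mon:
  assumes "\<sigma> permutes {..<d}"
  shows "mdeg d (perm_mon \<sigma> m) i = mdeg d m i"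
proof -
  have "mdeg d (perm_mon \<sigma> m) i = (\<Sum>j<d. (\<lambda>j. lookup m (j, i)) (\<sigma> j))"
    unfolding mdeg_def by (simp add: lookup_perm_mon[OF assms])
  also have "\<dots> = mdeg d m i"
    using sum.permute[OF assms, of "\<lambda>j. lookup m (j, i)"] by (simp add: mdeg_def comp_def)
  finally show ?thesis .
qed

definition factor_support :: "tmon \<Rightarrow> nat set" where
  "factor_support m = fst ` keys m"

lemma factor_support_add: "factor_support (a + b) = factor_support a \<union> factor_support b"
proof -
  have "keys (a + b) = keys a \<union> keys b"
    by (auto simp: in_keys_iff lookup_add)
  then show ?thesis
    unfolding factor_support_def by auto
qed

lemma factor_support_perm_mon:
  assumes "\<sigma> permutes {..<d}"
  shows "factor_support (perm_mon \<sigma> m) = \<sigma> -` factor_support m"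
  unfolding factor_support_def
proof (intro set_eqI iffI)
  fix x assume "x \<in> fst ` keys (perm_mon \<sigma> m)"
  then obtain y where "y \<in> keys (perm_mon \<sigma> m)" "x = fst y" by auto
  then have "(\<sigma> x, snd y) \<in> keys m" by (simp add: in_keys_iff lookup_perm_mon[OF assms])
  then show "x \<in> \<sigma> -` fst ` keys m" by force
next
  fix x assume "x \<in> \<sigma> -` fst ` keys m"
  then obtain z where "z \<in> keys m" "\<sigma> x = fst z" by auto
  then have "(x, snd z) \<in> keys (perm_mon \<sigma> m)" by (simp add: in_keys_iff lookup_perm_mon[OF assms])
  then show "x \<in> fst ` keys (perm_mon \<sigma> m)" by force
qed

lemma factor_support_perm_mon_eq_iff:
  assumes "\<sigma> permutes {..<d}"
  shows "factor_support (perm_mon \<sigma> m) = S \<longleftrightarrow> factor_support m = \<sigma> ` S"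
proof -
  have "surj \<sigma>" "inj \<sigma>"
    using permutes_bij[OF assms] by (auto simp: bij_def)
  then show ?thesis
    unfolding factor_support_perm_mon[OF assms]
    using surj_image_vimage_eq inj_vimage_image_eq by metis
qed

lemma card_factor_support_le:
  assumes "keys m \<subseteq> {..<d} \<times> {..<r}"
  shows "card (factor_support m) \<le> (\<Sum>i<r. mdeg d m i)"
proof -
  have "card (factor_support m) \<le> card (keys m)"
    unfolding factor_support_def by (rule card_image_le) simp
  also have "\<dots> \<le> (\<Sum>x\<in>keys m. lookup m x)"
    using card_eq_sum sum_mono[of "keys m" "\<lambda>_. 1::nat" "lookup m"]
    by (simp add: in_keys_iff Suc_le_eq)
  also have "\<dots> \<le> (\<Sum>x\<in>{..<d} \<times> {..<r}. lookup m x)"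
    by (rule sum_mono2) (use assms in auto)
  also have "\<dots> = (\<Sum>j<d. \<Sum>i<r. lookup m (j, i))"
    by (simp add: sum.cartesian_product)
  also have "\<dots> = (\<Sum>i<r. mdeg d m i)"
    unfolding mdeg_def by (rule sum.swap)
  finally show ?thesis .
qed

lemma exists_permutes_image_eq:
  assumes "finite U" "A \<subseteq> U" "B \<subseteq> U" "card A = card B"
  shows "\<exists>\<sigma>. \<sigma> permutes U \<and> \<sigma> ` A = B"
proof -
  have fin: "finite A" "finite B"
    using assms finite_subset by blast+
  obtain f where f: "bij_betw f A B"
    using finite_same_card_bij[OF fin assms(4)] by blast
  have "card (U - A) = card (U - B)"
    using assms fin by (simp add: card_Diff_subset)
  then obtain g where g: "bij_betw g (U - A) (U - B)"
    using finite_same_card_bij[of "U - A" "U - B"] assms by auto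
  define \<sigma> where "\<sigma> x = (if x \<in> A then f x else if x \<in> U then g x else x)" for x
  have on_A: "bij_betw \<sigma> A B"
    using f by (rule bij_betw_cong[THEN iffD1, rotated]) (simp add: \<sigma>_def)
  have "bij_betw \<sigma> (U - A) (U - B)"
    using g by (rule bij_betw_cong[THEN iffD1, rotated]) (simp add: \<sigma>_def)
  then have "bij_betw \<sigma> (A \<union> (U - A)) (B \<union> (U - B))"
    by (intro bij_betw_combine[OF on_A]) auto
  moreover have "A \<union> (U - A) = U" "B \<union> (U - B) = U"
    using assms by auto
  moreover have "\<sigma> x = x" if "x \<notin> U" for x
    using that assms(2) by (auto simp: \<sigma>_def)
  ultimately have "\<sigma> permutes U"
    by (intro bij_imp_permutes) simp_all
  moreover have "\<sigma> ` A = B"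
    using on_A by (simp add: bij_betw_def)
  ultimately show ?thesis by blast
qed

lemma exists_permutes_image_lessThan:
  assumes "T \<subseteq> {..<d}"
  shows "\<exists>\<tau>. \<tau> permutes {..<d} \<and> \<tau> ` {..<card T} = T"
proof -
  have "card T \<le> d"
    using assms card_mono[of "{..<d}" T] by simp
  then show ?thesis
    using exists_permutes_image_eq[of "{..<d}" "{..<card T}" T] assms by auto
qed

lemma exists_permutes_fixing_0_image_lessThan:
  assumes "S \<subseteq> {..<d}" "0 \<in> S"
  shows "\<exists>\<sigma>. \<sigma> permutes {..<d} \<and> \<sigma> 0 = 0 \<and> \<sigma> ` {..<card S} = S"
proof -
  have fin: "finite S"
    using assms finite_subset by blast
  have "card S \<le> d"
    using assms card_mono[of "{..<d}" S] by simp
  moreover have "card (S - {0}) = card {1..<card S}"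
    using assms fin by simp
  ultimately obtain \<sigma> where \<sigma>: "\<sigma> permutes {1..<d}" "\<sigma> ` {1..<card S} = S - {0}"
    using exists_permutes_image_eq[of "{1..<d}" "{1..<card S}" "S - {0}"] assms by fastforce
  have "\<sigma> 0 = 0"
    using \<sigma>(1) permutes_not_in by fastforce
  moreover have "\<sigma> permutes {..<d}"
    using \<sigma>(1) by (rule permutes_subset) auto
  moreover have "{..<card S} = insert 0 {1..<card S}"
    using assms fin card_gt_0_iff by fastforce
  then have "\<sigma> ` {..<card S} = S"
    using \<sigma>(2) \<open>\<sigma> 0 = 0\<close> assms by auto
  ultimately show ?thesis by blast
qed

definition perm_invariant :: "nat \<Rightarrow> ('a::zero) tpoly \<Rightarrow> bool" where
  "perm_invariant d p \<longleftrightarrow> (\<forall>\<sigma> m. \<sigma> permutes {..<d} \<longrightarrow> lookup p (perm_mon \<sigma> m) = lookup p m)"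

lemma symmetric_tensor_iff: "symmetric_tensor d r p \<longleftrightarrow> in_tensor d r p \<and> perm_invariant d p"
  unfolding symmetric_tensor_def perm_invariant_def ..

lemma sum_keys_perm_invariant:
  assumes p: "perm_invariant d p" and \<sigma>: "\<sigma> permutes {..<d}"
  shows "(\<Sum>a\<in>keys p. F a * lookup p a) = (\<Sum>a\<in>keys p. F (perm_mon \<sigma> a) * lookup p a)"
proof -
  have inv: "inv \<sigma> permutes {..<d}"
    using permutes_inv[OF \<sigma>] .
  have "lookup p (perm_mon \<sigma> a) = lookup p a" "lookup p (perm_mon (inv \<sigma>) a) = lookup p a" for a
    using p \<sigma> inv unfolding perm_invariant_def by blast+
  then show ?thesis
    by (intro sum.reindex_bij_witness[of _ "perm_mon \<sigma>" "perm_mon (inv \<sigma>)"])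
      (simp_all add: in_keys_iff perm_mon_perm_mon_inv[OF \<sigma>] perm_mon_inv_perm_mon[OF \<sigma>])
qed

definition bilin_form :: "(tmon \<Rightarrow> tmon \<Rightarrow> 'a) \<Rightarrow> 'a tpoly \<Rightarrow> 'a tpoly \<Rightarrow> 'a::comm_semiring_1" where
  "bilin_form h p q = (\<Sum>a\<in>keys p. \<Sum>b\<in>keys q. h a b * (lookup p a * lookup q b))"

lemma bilin_form_swap: "bilin_form (\<lambda>a b. h b a) p q = bilin_form h q p"
  unfolding bilin_form_def by (subst sum.swap) (simp add: mult_ac)

lemma bilin_form_add_weight:
  "bilin_form (\<lambda>a b. g a b + h a b) p q = bilin_form g p q + bilin_form h p q"
  unfolding bilin_form_def by (simp add: distrib_right sum.distrib)

lemma bilin_form_sum_weight: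
  "bilin_form (\<lambda>a b. \<Sum>x\<in>X. h x a b) p q = (\<Sum>x\<in>X. bilin_form (h x) p q)"
proof -
  have "bilin_form (\<lambda>a b. \<Sum>x\<in>X. h x a b) p q
      = (\<Sum>a\<in>keys p. \<Sum>x\<in>X. \<Sum>b\<in>keys q. h x a b * (lookup p a * lookup q b))"
    unfolding bilin_form_def sum_distrib_right by (rule sum.cong[OF refl], rule sum.swap)
  also have "\<dots> = (\<Sum>x\<in>X. bilin_form (h x) p q)"
    unfolding bilin_form_def by (rule sum.swap)
  finally show ?thesis .
qed

lemma bilin_form_scale_weight:
  "bilin_form (\<lambda>a b. c * h a b) p q = c * bilin_form h p q"
  unfolding bilin_form_def sum_distrib_left mult.assoc ..

lemma bilin_form_nested:
  "bilin_form h p q = (\<Sum>a\<in>keys p. (\<Sum>b\<in>keys q. h a b * lookup q b) * lookup p a)"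
  unfolding bilin_form_def sum_distrib_right
  by (intro sum.cong refl) (simp add: mult_ac)

lemma bilin_form_perm_invariant:
  assumes p: "perm_invariant d p" and q: "perm_invariant d q"
    and \<sigma>: "\<sigma> permutes {..<d}" and \<tau>: "\<tau> permutes {..<d}"
  shows "bilin_form h p q = bilin_form (\<lambda>a b. h (perm_mon \<sigma> a) (perm_mon \<tau> b)) p q"
proof -
  have "bilin_form h p q = (\<Sum>a\<in>keys p. (\<Sum>b\<in>keys q. h a (perm_mon \<tau> b) * lookup q b) * lookup p a)"
    unfolding bilin_form_nested
    by (rule sum.cong[OF refl], rule arg_cong[where f="\<lambda>x. x * _"], rule sum_keys_perm_invariant[OF q \<tau>])
  also have "\<dots> = (\<Sum>a\<in>keys p. (\<Sum>b\<in>keys q. h (perm_mon \<sigma> a) (perm_mon \<tau> b) * lookup q b) * lookup p a)"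
    by (rule sum_keys_perm_invariant[OF p \<sigma>])
  finally show ?thesis
    unfolding bilin_form_nested[of "\<lambda>a b. h (perm_mon \<sigma> a) (perm_mon \<tau> b)"] .
qed

lemma poly_mapping_sum_single_keys: "p = (\<Sum>a\<in>keys p. Poly_Mapping.single a (lookup p a))"
  by (rule poly_mapping_eqI) (simp add: lookup_sum lookup_single when_def in_keys_iff)

lemma lookup_mult_bilin_form:
  "lookup (p * q) m = bilin_form (\<lambda>a b. if a + b = m then 1 else 0) p q"
proof -
  have "p * q = (\<Sum>a\<in>keys p. Poly_Mapping.single a (lookup p a)) * (\<Sum>b\<in>keys q. Poly_Mapping.single b (lookup q b))"
    by (simp flip: poly_mapping_sum_single_keys)
  also have "\<dots> = (\<Sum>a\<in>keys p. \<Sum>b\<in>keys q. Poly_Mapping.single (a + b) (lookup p a * lookup q b))"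
    by (simp add: sum_product mult_single)
  finally have "lookup (p * q) m = (\<Sum>a\<in>keys p. \<Sum>b\<in>keys q. if a + b = m then lookup p a * lookup q b else 0)"
    by (simp add: lookup_sum lookup_single when_def)
  then show ?thesis
    unfolding bilin_form_def by (auto intro!: sum.cong)
qed

lemma perm_invariant_add: "perm_invariant d p \<Longrightarrow> perm_invariant d q \<Longrightarrow> perm_invariant d (p + q)"
  unfolding perm_invariant_def by (simp add: lookup_add)

lemma perm_invariant_const: "perm_invariant d (Poly_Mapping.single 0 c)"
  unfolding perm_invariant_def by (auto simp: lookup_single when_def perm_mon_eq_0_iff)

lemma perm_invariant_mult:
  fixes p q :: "'a::comm_semiring_1 tpoly"
  assumes p: "perm_invariant d p" and q: "perm_invariant d q"
  shows "perm_invariant d (p * q)"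
  unfolding perm_invariant_def
proof (intro allI impI)
  fix \<sigma> m assume \<sigma>: "\<sigma> permutes {..<d}"
  have "lookup (p * q) (perm_mon \<sigma> m)
      = bilin_form (\<lambda>a b. if perm_mon \<sigma> a + perm_mon \<sigma> b = perm_mon \<sigma> m then 1 else 0) p q"
    unfolding lookup_mult_bilin_form by (rule bilin_form_perm_invariant[OF p q \<sigma> \<sigma>])
  also have "\<dots> = lookup (p * q) m"
    unfolding lookup_mult_bilin_form perm_mon_add_eq_iff[OF \<sigma>] ..
  finally show "lookup (p * q) (perm_mon \<sigma> m) = lookup (p * q) m" .
qed

lemma in_tensor_add: "in_tensor d r p \<Longrightarrow> in_tensor d r q \<Longrightarrow> in_tensor d r (p + q)"
  unfolding in_tensor_def by (metis Poly_Mapping.keys_add Un_iff subsetD)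

lemma in_tensor_const: "in_tensor d r (Poly_Mapping.single 0 c)"
  unfolding in_tensor_def by simp

lemma in_tensor_mult:
  assumes "in_tensor d r p" "in_tensor d r q"
  shows "in_tensor d r (p * q)"
  unfolding in_tensor_def
proof (intro allI impI)
  fix m assume "m \<in> keys (p * q)"
  then obtain a b where ab: "m = a + b" "a \<in> keys p" "b \<in> keys q"
    using keys_mult by blast
  then have "keys a \<subseteq> {..<d} \<times> {..<r}" "keys b \<subseteq> {..<d} \<times> {..<r}"
    using assms unfolding in_tensor_def by auto
  then show "keys m \<subseteq> {..<d} \<times> {..<r}"
    using Poly_Mapping.keys_add[of a b] ab(1) by blast
qed

lemma subalg_gen_symmetric_tensor:
  assumes "\<And>g. g \<in> G \<Longrightarrow> symmetric_tensor d r g" and "p \<in> subalg_gen G"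
  shows "symmetric_tensor d r p"
  using assms(2)
proof induction
  case (gen g)
  then show ?case by (rule assms(1))
qed (auto simp: symmetric_tensor_iff in_tensor_const perm_invariant_const
      in_tensor_add perm_invariant_add in_tensor_mult perm_invariant_mult)

definition lin_form :: "(tmon \<Rightarrow> 'a) \<Rightarrow> 'a tpoly \<Rightarrow> 'a::comm_semiring_1" where
  "lin_form w p = (\<Sum>m\<in>keys p. w m * lookup p m)"

lemma lin_form_superset:
  assumes "finite K" "keys p \<subseteq> K"
  shows "lin_form w p = (\<Sum>m\<in>K. w m * lookup p m)"
  unfolding lin_form_def by (rule sum.mono_neutral_left) (use assms in \<open>auto simp: in_keys_iff\<close>)

lemma lin_form_add: "lin_form w (p + q) = lin_form w p + lin_form w q"
proof -
  let ?K = "keys p \<union> keys q"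
  have "lin_form w (p + q) = (\<Sum>m\<in>?K. w m * lookup (p + q) m)"
    using Poly_Mapping.keys_add[of p q] by (intro lin_form_superset) auto
  also have "\<dots> = (\<Sum>m\<in>?K. w m * lookup p m) + (\<Sum>m\<in>?K. w m * lookup q m)"
    by (simp add: lookup_add distrib_left sum.distrib)
  also have "\<dots> = lin_form w p + lin_form w q"
    using lin_form_superset[of ?K p w] lin_form_superset[of ?K q w] by simp
  finally show ?thesis .
qed

lemma lin_form_zero: "lin_form w 0 = 0"
  by (simp add: lin_form_def)

lemma lin_form_single: "lin_form w (Poly_Mapping.single m c) = w m * c"
  by (cases "c = 0") (simp_all add: lin_form_def)

lemma lin_form_sum: "lin_form w (\<Sum>x\<in>X. f x) = (\<Sum>x\<in>X. lin_form w (f x))"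
  by (induction X rule: infinite_finite_induct) (simp_all add: lin_form_zero lin_form_add)

lemma lin_form_mult: "lin_form w (p * q) = bilin_form (\<lambda>a b. w (a + b)) p q"
proof -
  let ?K = "(\<lambda>(a, b). a + b) ` (keys p \<times> keys q)"
  have K: "keys (p * q) \<subseteq> ?K"
    using keys_mult[of p q] by auto
  have "lin_form w (p * q) = (\<Sum>m\<in>?K. w m * bilin_form (\<lambda>a b. if a + b = m then 1 else 0) p q)"
    by (simp add: lin_form_superset[OF _ K] lookup_mult_bilin_form)
  also have "\<dots> = (\<Sum>m\<in>?K. bilin_form (\<lambda>a b. if a + b = m then w m else 0) p q)"
  proof -
    have "w m * (if a + b = m then 1 else 0) = (if a + b = m then w m else 0)" for a b m
      by simp
    then show ?thesis
      by (simp only: flip: bilin_form_scale_weight)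
  qed
  also have "\<dots> = bilin_form (\<lambda>a b. \<Sum>m\<in>?K. if a + b = m then w m else 0) p q"
    by (rule bilin_form_sum_weight[symmetric])
  also have "\<dots> = bilin_form (\<lambda>a b. w (a + b)) p q"
    unfolding bilin_form_def
    by (intro sum.cong refl arg_cong2[where f="(*)"]) (force simp: sum.delta)
  finally show ?thesis .
qed

lemma lin_form_const_mult: "lin_form w (Poly_Mapping.single 0 c * p) = c * lin_form w p"
  unfolding lin_form_mult
  by (cases "c = 0") (simp_all add: bilin_form_def lin_form_def sum_distrib_left mult_ac)

definition alt_binom :: "nat \<Rightarrow> nat \<Rightarrow> int" where
  "alt_binom n l = (-1)^(l-1) * int (n choose l)"

lemma sum_alt_binom_choose_pred_mult_choose_eq_0:
  assumes "1 \<le> s" "1 \<le> t" "s + t \<le> d"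
  shows "(\<Sum>l\<in>{1..d}. of_int (alt_binom d l) * of_nat ((l-1) choose (s-1)) * of_nat (l choose t))
       = (0::'a::comm_ring_1)"
proof -
  have "(\<Sum>l\<in>{1..d}. alt_binom d l * int ((l-1) choose (s-1)) * int (l choose t)) = 0"
    using alternating_sum_choose_pred_mult_choose_eq_0[OF assms] by (simp add: alt_binom_def)
  then have "of_int (\<Sum>l\<in>{1..d}. alt_binom d l * int ((l-1) choose (s-1)) * int (l choose t)) = (0::'a)"
    by simp
  then show ?thesis
    by (simp add: of_int_sum)
qed

lemma sum_alt_binom_mult_choose_pred:
  assumes "1 \<le> k" "k \<le> d"
  shows "(\<Sum>l\<in>{1..d}. of_int (alt_binom d l) * of_nat ((l-1) choose (k-1))) = ((-1)^(k-1) :: 'a::comm_ring_1)"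
proof -
  have "(\<Sum>l\<in>{1..d}. alt_binom d l * int ((l-1) choose (k-1))) = (-1)^(k-1)"
    using alternating_sum_choose_mult_choose_pred[OF assms] by (simp add: alt_binom_def)
  then have "of_int (\<Sum>l\<in>{1..d}. alt_binom d l * int ((l-1) choose (k-1))) = ((-1)^(k-1) :: 'a)"
    by simp
  then show ?thesis
    by (simp add: of_int_sum)
qed

definition pair_weight ::
    "nat \<Rightarrow> nat \<Rightarrow> (nat \<Rightarrow> nat) \<Rightarrow> nat \<Rightarrow> tmon \<Rightarrow> tmon \<Rightarrow> 'a::comm_ring_1" where
  "pair_weight d r \<gamma> i a b =
     (if \<forall>j<r. mdeg d a j + mdeg d b j = \<gamma> j then of_nat (lookup a (0, i)) else 0)"

definition half_weight ::
    "nat \<Rightarrow> nat \<Rightarrow> (nat \<Rightarrow> nat) \<Rightarrow> nat \<Rightarrow> tmon \<Rightarrow> tmon \<Rightarrow> 'a::comm_ring_1" where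
  "half_weight d r \<gamma> i a b = (\<Sum>l\<in>{1..d}. of_int (alt_binom d l) *
     (if factor_support a \<subseteq> {..<l} \<and> factor_support b \<subseteq> {..<l} then pair_weight d r \<gamma> i a b else 0))"

definition sep_weight ::
    "nat \<Rightarrow> nat \<Rightarrow> (nat \<Rightarrow> nat) \<Rightarrow> nat \<Rightarrow> tmon \<Rightarrow> 'a::comm_ring_1" where
  "sep_weight d r \<gamma> i m = (\<Sum>l\<in>{1..d}. of_int (alt_binom d l) *
     (if factor_support m \<subseteq> {..<l} \<and> (\<forall>j<r. mdeg d m j = \<gamma> j) then of_nat (lookup m (0, i)) else 0))"

lemma sep_weight_add:
  "sep_weight d r \<gamma> i (a + b) = half_weight d r \<gamma> i a b + half_weight d r \<gamma> i b a"
  unfolding sep_weight_def half_weight_def pair_weight_def sum.distrib[symmetric] distrib_left[symmetric]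
  by (intro sum.cong refl arg_cong2[where f="(*)"])
    (auto simp: factor_support_add mdeg_add lookup_add add.commute)

lemma lin_form_sep_weight_mult:
  "lin_form (sep_weight d r \<gamma> i) (p * q)
     = bilin_form (half_weight d r \<gamma> i) p q + bilin_form (half_weight d r \<gamma> i) q p"
  unfolding lin_form_mult sep_weight_add bilin_form_add_weight
  using bilin_form_swap[of "half_weight d r \<gamma> i" p q] by simp

definition support_block :: "nat \<Rightarrow> nat \<Rightarrow> (nat \<Rightarrow> nat) \<Rightarrow> nat \<Rightarrow>
    'a tpoly \<Rightarrow> 'a tpoly \<Rightarrow> nat set \<Rightarrow> nat set \<Rightarrow> 'a::comm_ring_1" where
  "support_block d r \<gamma> i p q S T = bilin_form
     (\<lambda>a b. if factor_support a = S \<and> factor_support b = T then pair_weight d r \<gamma> i a b else 0) p q"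

lemma sum_sum_if_eq:
  assumes "finite A" "finite B"
  shows "(\<Sum>x\<in>A. \<Sum>y\<in>B. if f = x \<and> g = y then v else 0)
       = (if f \<in> A \<and> g \<in> B then v else (0::'a::comm_monoid_add))"
proof -
  have "(\<Sum>x\<in>A. \<Sum>y\<in>B. if f = x \<and> g = y then v else 0)
      = (\<Sum>x\<in>A. if f = x then \<Sum>y\<in>B. if g = y then v else 0 else 0)"
    by (intro sum.cong refl) auto
  then show ?thesis
    using assms by (simp add: sum.delta')
qed

lemma bilin_form_eq_0:
  assumes "\<And>a b. a \<in> keys p \<Longrightarrow> b \<in> keys q \<Longrightarrow> h a b = 0"
  shows "bilin_form h p q = 0"
  unfolding bilin_form_def using assms by simp

lemma bilin_form_half_weight:
  "bilin_form (half_weight d r \<gamma> i) p q = (\<Sum>l\<in>{1..d}. of_int (alt_binom d l) *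
     (\<Sum>S\<in>Pow {..<l}. \<Sum>T\<in>Pow {..<l}. support_block d r \<gamma> i p q S T))"
proof -
  have hw: "half_weight d r \<gamma> i = (\<lambda>a b. \<Sum>l\<in>{1..d}. of_int (alt_binom d l) *
     (\<Sum>S\<in>Pow {..<l}. \<Sum>T\<in>Pow {..<l}.
        if factor_support a = S \<and> factor_support b = T then pair_weight d r \<gamma> i a b else 0))"
    unfolding half_weight_def by (intro ext) (simp add: sum_sum_if_eq)
  show ?thesis
    unfolding hw support_block_def by (simp add: bilin_form_sum_weight bilin_form_scale_weight)
qed

lemma pair_weight_perm_mon:
  assumes "\<sigma> permutes {..<d}" "\<sigma> 0 = 0" "\<tau> permutes {..<d}"
  shows "pair_weight d r \<gamma> i (perm_mon \<sigma> a) (perm_mon \<tau> b) = pair_weight d r \<gamma> i a b"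
  by (auto simp: pair_weight_def mdeg_perm_mon[OF assms(1)] mdeg_perm_mon[OF assms(3)]
      lookup_perm_mon[OF assms(1)] assms(2))

lemma support_block_perm_invariant:
  assumes p: "perm_invariant d p" and q: "perm_invariant d q"
    and \<sigma>: "\<sigma> permutes {..<d}" "\<sigma> 0 = 0" and \<tau>: "\<tau> permutes {..<d}"
  shows "support_block d r \<gamma> i p q S T = support_block d r \<gamma> i p q (\<sigma> ` S) (\<tau> ` T)"
  unfolding support_block_def
  by (subst bilin_form_perm_invariant[OF p q \<sigma>(1) \<tau>])
    (simp add: factor_support_perm_mon_eq_iff[OF \<sigma>(1)] factor_support_perm_mon_eq_iff[OF \<tau>]
      pair_weight_perm_mon[OF \<sigma> \<tau>] cong: if_cong)

lemma support_block_canonical: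
  assumes p: "perm_invariant d p" and q: "perm_invariant d q"
    and S: "S \<subseteq> {..<d}" "0 \<in> S" and T: "T \<subseteq> {..<d}"
  shows "support_block d r \<gamma> i p q S T = support_block d r \<gamma> i p q {..<card S} {..<card T}"
proof -
  obtain \<sigma> where \<sigma>: "\<sigma> permutes {..<d}" "\<sigma> 0 = 0" "\<sigma> ` {..<card S} = S"
    using exists_permutes_fixing_0_image_lessThan[OF S] by blast
  obtain \<tau> where \<tau>: "\<tau> permutes {..<d}" "\<tau> ` {..<card T} = T"
    using exists_permutes_image_lessThan[OF T] by blast
  show ?thesis
    using support_block_perm_invariant[OF p q \<sigma>(1,2) \<tau>(1), of r \<gamma> i "{..<card S}" "{..<card T}"] \<sigma>(3) \<tau>(2)
    by simp
qed

lemma support_block_eq_0_if_0_notin: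
  assumes "0 \<notin> S"
  shows "support_block d r \<gamma> i p q S T = 0"
proof -
  have "lookup a (0, i) = 0" if "factor_support a = S" for a
    using that assms unfolding factor_support_def by (force simp: in_keys_iff)
  then show ?thesis
    unfolding support_block_def by (intro bilin_form_eq_0) (simp add: pair_weight_def)
qed

lemma support_block_empty:
  assumes "lookup q 0 = 0"
  shows "support_block d r \<gamma> i p q S {} = 0"
proof -
  have "b = 0" if "factor_support b = {}" for b
    using that unfolding factor_support_def by simp
  then show ?thesis
    unfolding support_block_def using assms by (intro bilin_form_eq_0) (auto simp: in_keys_iff)
qed

lemma support_block_eq_0_if_card_gt:
  assumes "in_tensor d r p" "in_tensor d r q" "(\<Sum>j<r. \<gamma> j) \<le> d" "d < s + t"
  shows "support_block d r \<gamma> i p q {..<s} {..<t} = 0"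
  unfolding support_block_def
proof (intro bilin_form_eq_0)
  fix a b assume ab: "a \<in> keys p" "b \<in> keys q"
  have False if "factor_support a = {..<s}" "factor_support b = {..<t}" "\<forall>j<r. mdeg d a j + mdeg d b j = \<gamma> j"
  proof -
    have "s \<le> (\<Sum>j<r. mdeg d a j)" "t \<le> (\<Sum>j<r. mdeg d b j)"
      using card_factor_support_le[of _ d r] assms(1,2) ab that(1,2)
      unfolding in_tensor_def by (metis card_lessThan)+
    moreover have "(\<Sum>j<r. mdeg d a j) + (\<Sum>j<r. mdeg d b j) = (\<Sum>j<r. \<gamma> j)"
      using that(3) by (simp add: sum.distrib[symmetric])
    ultimately show False
      using assms(3,4) by linarith
  qed
  then show "(if factor_support a = {..<s} \<and> factor_support b = {..<t} then pair_weight d r \<gamma> i a b else 0) = 0"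
    by (auto simp: pair_weight_def)
qed

lemma sum_card_group:
  assumes "finite A" "\<And>S. S \<in> A \<Longrightarrow> card S \<le> n"
  shows "(\<Sum>S\<in>A. f (card S)) = (\<Sum>s\<le>n. of_nat (card {S\<in>A. card S = s}) * (f s :: 'a::comm_semiring_1))"
proof -
  have "(\<Sum>S\<in>A. f (card S)) = (\<Sum>s\<le>n. \<Sum>S\<in>{S\<in>A. card S = s}. f (card S))"
    by (rule sum.group[symmetric]) (use assms in auto)
  also have "\<dots> = (\<Sum>s\<le>n. of_nat (card {S\<in>A. card S = s}) * f s)"
    by simp
  finally show ?thesis .
qed

lemma card_subsets_containing_0:
  assumes "1 \<le> l"
  shows "card {S. S \<subseteq> {..<l} \<and> 0 \<in> S \<and> card S = s} = (if s = 0 then 0 else (l - 1) choose (s - 1))"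
proof (cases "s = 0")
  case True
  have "card S \<noteq> 0" if "S \<subseteq> {..<l}" "0 \<in> S" for S :: "nat set"
    using that finite_subset[OF that(1)] by auto
  then show ?thesis
    using True by auto
next
  case False
  let ?A = "{S. S \<subseteq> {..<l} \<and> 0 \<in> S \<and> card S = s}"
  let ?B = "{B. B \<subseteq> {1..<l} \<and> card B = s - 1}"
  have "bij_betw (\<lambda>S. S - {0}) ?A ?B"
  proof (rule bij_betw_byWitness[where f'="insert 0"])
    show "(\<lambda>S. S - {0}) ` ?A \<subseteq> ?B"
      using finite_subset[of _ "{..<l}"] by fastforce
    show "insert 0 ` ?B \<subseteq> ?A"
    proof
      fix x assume "x \<in> insert 0 ` ?B"
      then obtain B where B: "B \<in> ?B" "x = insert 0 B" by auto
      then have "finite B" "0 \<notin> B"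
        using finite_subset[of B "{1..<l}"] by auto
      then show "x \<in> ?A"
        using B False assms by auto
    qed
  qed auto
  then have "card ?A = card ?B"
    by (rule bij_betw_same_card)
  also have "\<dots> = (l - 1) choose (s - 1)"
    using n_subsets[of "{1..<l}" "s - 1"] by simp
  finally show ?thesis
    using False by simp
qed

lemma sum_support_blocks:
  assumes p: "perm_invariant d p" and q: "perm_invariant d q" and l: "1 \<le> l" "l \<le> d"
  shows "(\<Sum>S\<in>Pow {..<l}. \<Sum>T\<in>Pow {..<l}. support_block d r \<gamma> i p q S T) =
    (\<Sum>s\<le>d. \<Sum>t\<le>d. of_nat (if s = 0 then 0 else (l - 1) choose (s - 1)) * of_nat (l choose t)
       * support_block d r \<gamma> i p q {..<s} {..<t})"
proof -
  let ?y = "\<lambda>s t. support_block d r \<gamma> i p q {..<s} {..<t}"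
  let ?A0 = "{S\<in>Pow {..<l}. 0 \<in> S}"
  have card_le: "card S \<le> d" if "S \<in> Pow {..<l}" for S
    using that card_mono[of "{..<l}" S] l by auto
  have "(\<Sum>S\<in>Pow {..<l}. \<Sum>T\<in>Pow {..<l}. support_block d r \<gamma> i p q S T) =
        (\<Sum>S\<in>Pow {..<l}. if 0 \<in> S then (\<Sum>T\<in>Pow {..<l}. ?y (card S) (card T)) else 0)"
    using l by (intro sum.cong refl)
      (auto intro!: sum.cong support_block_canonical[OF p q] simp: support_block_eq_0_if_0_notin)
  also have "\<dots> = (\<Sum>S\<in>?A0. \<Sum>T\<in>Pow {..<l}. ?y (card S) (card T))"
    by (rule sum.inter_filter[symmetric]) simp
  also have "\<dots> = (\<Sum>S\<in>?A0. \<Sum>t\<le>d. of_nat (l choose t) * ?y (card S) t)"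
  proof (intro sum.cong refl)
    fix S
    have "{T\<in>Pow {..<l}. card T = t} = {T. T \<subseteq> {..<l} \<and> card T = t}" for t
      by auto
    then show "(\<Sum>T\<in>Pow {..<l}. ?y (card S) (card T)) = (\<Sum>t\<le>d. of_nat (l choose t) * ?y (card S) t)"
      using sum_card_group[of "Pow {..<l}" d "?y (card S)"] card_le by (simp add: n_subsets)
  qed
  also have "\<dots> = (\<Sum>s\<le>d. of_nat (card {S\<in>?A0. card S = s}) * (\<Sum>t\<le>d. of_nat (l choose t) * ?y s t))"
    by (rule sum_card_group) (use card_le in auto)
  also have "\<dots> = (\<Sum>s\<le>d. \<Sum>t\<le>d. of_nat (if s = 0 then 0 else (l - 1) choose (s - 1)) * of_nat (l choose t) * ?y s t)"
  proof -
    have "{S\<in>?A0. card S = s} = {S. S \<subseteq> {..<l} \<and> 0 \<in> S \<and> card S = s}" for s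
      by auto
    then show ?thesis
      by (simp add: card_subsets_containing_0[OF l(1)] sum_distrib_left mult.assoc)
  qed
  finally show ?thesis .
qed

lemma bilin_form_half_weight_eq_0:
  assumes p: "symmetric_tensor d r p" "lookup p 0 = 0"
    and q: "symmetric_tensor d r q" "lookup q 0 = 0"
    and deg: "(\<Sum>j<r. \<gamma> j) \<le> d"
  shows "bilin_form (half_weight d r \<gamma> i) p q = (0::'a::comm_ring_1)"
proof -
  have p': "in_tensor d r p" "perm_invariant d p" and q': "in_tensor d r q" "perm_invariant d q"
    using p(1) q(1) by (simp_all add: symmetric_tensor_iff)
  let ?y = "\<lambda>s t. support_block d r \<gamma> i p q {..<s} {..<t} :: 'a"
  let ?c = "\<lambda>l s t. of_int (alt_binom d l) * of_nat (if s = 0 then 0 else (l - 1) choose (s - 1))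
      * of_nat (l choose t) :: 'a"
  have "bilin_form (half_weight d r \<gamma> i) p q = (\<Sum>l\<in>{1..d}. \<Sum>s\<le>d. \<Sum>t\<le>d. ?c l s t * ?y s t)"
    unfolding bilin_form_half_weight
    by (intro sum.cong refl) (simp add: sum_support_blocks[OF p'(2) q'(2)] sum_distrib_left mult.assoc)
  also have "\<dots> = (\<Sum>s\<le>d. \<Sum>l\<in>{1..d}. \<Sum>t\<le>d. ?c l s t * ?y s t)"
    by (rule sum.swap)
  also have "\<dots> = (\<Sum>s\<le>d. \<Sum>t\<le>d. \<Sum>l\<in>{1..d}. ?c l s t * ?y s t)"
    by (rule sum.cong[OF refl], rule sum.swap)
  also have "\<dots> = (\<Sum>s\<le>d. \<Sum>t\<le>d. (\<Sum>l\<in>{1..d}. ?c l s t) * ?y s t)"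
    by (simp only: sum_distrib_right)
  also have "\<dots> = 0"
  proof (intro sum.neutral ballI)
    fix s t
    consider "s = 0" | "t = 0" | "1 \<le> s" "1 \<le> t" "s + t \<le> d" | "d < s + t"
      by linarith
    then show "(\<Sum>l\<in>{1..d}. ?c l s t) * ?y s t = 0"
    proof cases
      case 2
      then show ?thesis
        using support_block_empty[OF q(2)] by simp
    next
      case 3
      then show ?thesis
        using sum_alt_binom_choose_pred_mult_choose_eq_0[of s t d, where 'a='a] by simp
    next
      case 4
      then show ?thesis
        using support_block_eq_0_if_card_gt[OF p'(1) q'(1) deg] by simp
    qed simp
  qed
  finally show ?thesis .
qed

lemma sep_weight_eq_0_if_mdeg_ne:
  assumes "\<exists>j<r. mdeg d m j \<noteq> \<gamma> j"
  shows "sep_weight d r \<gamma> i m = 0"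
  unfolding sep_weight_def using assms by (intro sum.neutral) auto

lemma lin_form_sep_weight_const:
  assumes "\<exists>j<r. \<gamma> j \<noteq> 0"
  shows "lin_form (sep_weight d r \<gamma> i) (Poly_Mapping.single 0 c) = (0::'a::comm_ring_1)"
proof -
  have "sep_weight d r \<gamma> i 0 = (0::'a)"
    using assms by (intro sep_weight_eq_0_if_mdeg_ne) (simp add: mdeg_def)
  then show ?thesis
    by (simp add: lin_form_single)
qed

lemma lin_form_sep_weight_homogeneous:
  assumes "mdeg_less r \<beta> \<gamma>" "homogeneous_of d r \<beta> g"
  shows "lin_form (sep_weight d r \<gamma> i) g = (0::'a::comm_ring_1)"
  unfolding lin_form_def
proof (intro sum.neutral ballI)
  fix m assume "m \<in> keys g"
  then have "\<forall>j<r. mdeg d m j = \<beta> j"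
    using assms(2) unfolding homogeneous_of_def by blast
  then have "sep_weight d r \<gamma> i m = (0::'a)"
    using assms(1) unfolding mdeg_less_def by (intro sep_weight_eq_0_if_mdeg_ne) auto
  then show "sep_weight d r \<gamma> i m * lookup g m = 0"
    by simp
qed

lemma lin_form_sep_weight_Gamma_less:
  assumes \<gamma>: "\<exists>j<r. \<gamma> j \<noteq> 0" and deg: "(\<Sum>j<r. \<gamma> j) \<le> d"
    and "p \<in> Gamma_less d r \<gamma>"
  shows "lin_form (sep_weight d r \<gamma> i) p = (0::'a::comm_ring_1)"
proof -
  let ?G = "{p. symmetric_tensor d r p \<and> (\<exists>\<beta>. mdeg_less r \<beta> \<gamma> \<and> homogeneous_of d r \<beta> p)}"
  let ?L = "lin_form (sep_weight d r \<gamma> i) :: 'a tpoly \<Rightarrow> 'a"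
  have "p \<in> subalg_gen ?G"
    using assms(3) unfolding Gamma_less_def .
  then show ?thesis
  proof induction
    case (const c)
    then show ?case
      using lin_form_sep_weight_const[OF \<gamma>] .
  next
    case (gen g)
    then show ?case
      using lin_form_sep_weight_homogeneous by blast
  next
    case (add p q)
    then show ?case
      by (simp add: lin_form_add)
  next
    case (mult p q)
    define c e where "c = lookup p 0" and "e = lookup q 0"
    define p' where "p' = p + Poly_Mapping.single 0 (- c)"
    define q' where "q' = q + Poly_Mapping.single 0 (- e)"
    have split: "p = Poly_Mapping.single 0 c + p'" "q = Poly_Mapping.single 0 e + q'"
      by (rule poly_mapping_eqI, simp add: p'_def q'_def lookup_add lookup_single when_def)+
    have "p' \<in> subalg_gen ?G" "q' \<in> subalg_gen ?G"
      unfolding p'_def q'_def using mult.hyps by (auto intro: subalg_gen.intros)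
    then have sym: "symmetric_tensor d r p'" "symmetric_tensor d r q'"
      using subalg_gen_symmetric_tensor[of ?G d r] by blast+
    have const: "lookup p' 0 = 0" "lookup q' 0 = 0"
      by (simp_all add: p'_def q'_def c_def e_def lookup_add)
    have "?L (p' * q') = 0"
      using bilin_form_half_weight_eq_0[OF sym(1) const(1) sym(2) const(2) deg]
        bilin_form_half_weight_eq_0[OF sym(2) const(2) sym(1) const(1) deg]
      by (simp add: lin_form_sep_weight_mult)
    moreover have "?L p' = 0"
      using mult.IH(1) lin_form_sep_weight_const[OF \<gamma>] by (simp add: p'_def lin_form_add)
    moreover have "p * q = Poly_Mapping.single 0 c * q + Poly_Mapping.single 0 e * p' + p' * q'"
    proof -
      have "p * q = (Poly_Mapping.single 0 c + p') * (Poly_Mapping.single 0 e + q')"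
        by (simp only: flip: split)
      also have "\<dots> = Poly_Mapping.single 0 c * (Poly_Mapping.single 0 e + q')
          + Poly_Mapping.single 0 e * p' + p' * q'"
        by (simp add: algebra_simps)
      finally show ?thesis
        by (simp only: flip: split(2))
    qed
    ultimately show ?case
      using mult.IH(2) by (simp add: lin_form_add lin_form_const_mult)
  qed
qed

lemma lookup_mon_on:
  assumes "finite S"
  shows "lookup (mon_on r \<alpha> S) (j, i) = (if j \<in> S \<and> i < r then \<alpha> i else 0)"
proof -
  have "lookup (mon_on r \<alpha> S) (j, i) = (\<Sum>j'\<in>S. \<Sum>i'<r. (if (j', i') = (j, i) then \<alpha> i' else 0))"
    unfolding mon_on_def by (simp add: lookup_sum lookup_single when_def)
  also have "\<dots> = (\<Sum>j'\<in>S. if j' = j then (if i < r then \<alpha> i else 0) else 0)"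
    by (intro sum.cong refl) (auto simp: sum.delta)
  also have "\<dots> = (if j \<in> S \<and> i < r then \<alpha> i else 0)"
    using assms by (simp add: sum.delta')
  finally show ?thesis .
qed

lemma factor_support_mon_on:
  assumes "finite S" "\<exists>i<r. \<alpha> i \<noteq> 0"
  shows "factor_support (mon_on r \<alpha> S) = S"
  unfolding factor_support_def
proof (intro set_eqI iffI)
  fix j assume "j \<in> fst ` keys (mon_on r \<alpha> S)"
  then obtain x where "x \<in> keys (mon_on r \<alpha> S)" "j = fst x" by auto
  then show "j \<in> S"
    using lookup_mon_on[OF assms(1)] by (cases x) (auto simp: in_keys_iff split: if_splits)
next
  fix j assume "j \<in> S"
  obtain i where "i < r" "\<alpha> i \<noteq> 0"
    using assms by blast
  then have "(j, i) \<in> keys (mon_on r \<alpha> S)"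
    using \<open>j \<in> S\<close> lookup_mon_on[OF assms(1)] by (simp add: in_keys_iff)
  then show "j \<in> fst ` keys (mon_on r \<alpha> S)" by force
qed

lemma mdeg_mon_on:
  assumes "S \<subseteq> {..<d}" "i < r"
  shows "mdeg d (mon_on r \<alpha> S) i = card S * \<alpha> i"
proof -
  have fin: "finite S"
    using assms finite_subset by blast
  have "mdeg d (mon_on r \<alpha> S) i = (\<Sum>j<d. if j \<in> S then \<alpha> i else 0)"
    unfolding mdeg_def using assms(2) by (simp add: lookup_mon_on[OF fin])
  also have "\<dots> = (\<Sum>j\<in>{j\<in>{..<d}. j \<in> S}. \<alpha> i)"
    by (rule sum.inter_filter[symmetric]) simp
  also have "{j\<in>{..<d}. j \<in> S} = S"
    using assms by auto
  finally show ?thesis by simp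
qed

lemma lin_form_sep_weight_gamma_prod:
  assumes \<alpha>: "\<exists>j<r. \<alpha> j \<noteq> 0" and "i < r" "1 \<le> k" "k \<le> d"
  shows "lin_form (sep_weight d r (\<lambda>j. k * \<alpha> j) i) (gamma_prod d r \<alpha> k)
       = (-1)^(k-1) * (of_nat (\<alpha> i) :: 'a::comm_ring_1)"
proof -
  let ?Sets = "{S. S \<subseteq> {..<d} \<and> card S = k}"
  let ?v = "of_nat (\<alpha> i) :: 'a"
  have weight: "sep_weight d r (\<lambda>j. k * \<alpha> j) i (mon_on r \<alpha> S)
      = (\<Sum>l\<in>{1..d}. of_int (alt_binom d l) * (if S \<subseteq> {..<l} \<and> 0 \<in> S then ?v else 0))"
    if "S \<in> ?Sets" for S
  proof -
    have "finite S"
      using that finite_subset by blast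
    then show ?thesis
      unfolding sep_weight_def using that assms
      by (intro sum.cong refl) (auto simp: factor_support_mon_on mdeg_mon_on lookup_mon_on)
  qed
  have count: "(\<Sum>S\<in>?Sets. if S \<subseteq> {..<l} \<and> 0 \<in> S then ?v else 0) = of_nat ((l - 1) choose (k - 1)) * ?v"
    if "l \<in> {1..d}" for l
  proof -
    have "{S\<in>?Sets. S \<subseteq> {..<l} \<and> 0 \<in> S} = {S. S \<subseteq> {..<l} \<and> 0 \<in> S \<and> card S = k}"
      using that by auto
    then show ?thesis
      using card_subsets_containing_0[of l k] that assms(3)
      by (simp add: sum.inter_filter[symmetric])
  qed
  have "lin_form (sep_weight d r (\<lambda>j. k * \<alpha> j) i) (gamma_prod d r \<alpha> k)
      = (\<Sum>S\<in>?Sets. \<Sum>l\<in>{1..d}. of_int (alt_binom d l) * (if S \<subseteq> {..<l} \<and> 0 \<in> S then ?v else 0))"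
    unfolding gamma_prod_def lin_form_sum lin_form_single by (simp add: weight)
  also have "\<dots> = (\<Sum>l\<in>{1..d}. of_int (alt_binom d l) * (\<Sum>S\<in>?Sets. if S \<subseteq> {..<l} \<and> 0 \<in> S then ?v else 0))"
    by (subst sum.swap) (simp add: sum_distrib_left)
  also have "\<dots> = (\<Sum>l\<in>{1..d}. of_int (alt_binom d l) * of_nat ((l - 1) choose (k - 1))) * ?v"
    by (simp add: count sum_distrib_right mult.assoc)
  also have "\<dots> = (-1)^(k-1) * ?v"
    using sum_alt_binom_mult_choose_pred[OF assms(3,4), where 'a='a] by simp
  finally show ?thesis .
qed

lemma of_nat_Gcd_eq_0:
  assumes "\<And>n. n \<in> N \<Longrightarrow> of_nat n = (0::'a::semiring_1)"
  shows "of_nat (Gcd N) = (0::'a)"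
proof -
  have "CHAR('a) dvd Gcd N"
    by (rule Gcd_greatest) (use assms in \<open>simp add: of_nat_eq_0_iff_char_dvd\<close>)
  then show ?thesis
    by (simp add: of_nat_eq_0_iff_char_dvd)
qed

theorem corollary7p14:
  fixes r d k :: nat and \<alpha> :: "nat \<Rightarrow> nat"
  assumes "r \<ge> 1" and "d \<ge> 1" and "k \<ge> 1"
    and "\<exists>i<r. \<alpha> i \<noteq> 0"
    and "(of_nat (Gcd (\<alpha> ` {..<r})) :: 'a::comm_ring_1) dvd 1"
    and "k * (\<Sum>i<r. \<alpha> i) \<le> d"
  shows "(gamma_prod d r \<alpha> k :: 'a tpoly) \<notin> Gamma_less d r (\<lambda>i. k * \<alpha> i)"
proof
  assume mem: "(gamma_prod d r \<alpha> k :: 'a tpoly) \<in> Gamma_less d r (\<lambda>i. k * \<alpha> i)"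
  obtain i0 where i0: "i0 < r" "\<alpha> i0 \<noteq> 0"
    using assms(4) by blast
  have deg: "(\<Sum>i<r. k * \<alpha> i) \<le> d"
    using assms(6) by (simp add: sum_distrib_left)
  have "k \<le> k * \<alpha> i0"
    using i0 by simp
  also have "\<dots> \<le> (\<Sum>i<r. k * \<alpha> i)"
    using i0 by (intro member_le_sum) auto
  finally have "k \<le> d"
    using deg by linarith
  have \<gamma>: "\<exists>j<r. k * \<alpha> j \<noteq> 0"
    using i0 assms(3) by auto
  have "of_nat (\<alpha> i) = (0::'a)" if "i < r" for i
  proof -
    have "(-1)^(k-1) * (of_nat (\<alpha> i) :: 'a) = 0"
      using lin_form_sep_weight_gamma_prod[OF assms(4) that assms(3) \<open>k \<le> d\<close>, where 'a='a]
        lin_form_sep_weight_Gamma_less[OF \<gamma> deg mem, of i] by simp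
    then show ?thesis
      by (metis left_minus_one_mult_self mult_zero_right)
  qed
  then have "of_nat (Gcd (\<alpha> ` {..<r})) = (0::'a)"
    by (intro of_nat_Gcd_eq_0) auto
  with assms(5) show False
    by simp
qed

end
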